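(* Let $\sigma,\eta>0$ and $\mathscr{C}$ be a family of balls as in the context, and assume there is $\kappa>0$ such that $|B|^{1/3}\ge\kappa|x_B|$ for all $B\in\mathscr{C}$ with $|x_B|$ sufficiently large. Then there exists $L=L(\eta,\kappa)\ge2$ such that, for every sufficiently large $n$, every $B\in\mathscr{C}$ intersecting $B(0,2n)\setminus B(0,n)$ satisfies $B\subset B(0,Ln)$ and $|x_B|\ge L^{-1}n$. In particular, for every sufficiently large $n$ there are at most $\frac{4\pi}{3}\sigma L^6\kappa^{-3}$ balls $B\in\mathscr{C}$ intersecting $B(0,2n)\setminus B(0,n)$.
   Context: Cover: for constants $\sigma,\eta>0$, $\mathscr{C}$ is a family of closed balls in $\mathbb{R}^3$ with $\bigcup_{B\in\mathscr{C}}B=\mathbb{R}^3$ and $|B|\geq 4\pi/3$ for all $B\in\mathscr{C}$, such that (i) each ball in $\mathscr{C}$ intersects at most $\sigma$ balls in $\mathscr{C}$, and (ii) if $B,B'\in\mathscr{C}$ intersect then $\eta^{-1}\le |B|^{1/3}/|B'|^{1/3}\le\eta$. $|B|$ is the volume and $x_B$ the center of $B$; $B(0,r)$ is the ball of radius $r$ centered at the origin. *)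

theory Defs
  imports "HOL-Analysis.Analysis"
begin

type_synonym ball3 = "(real ^ 3) \<times> real"

definition ball_set :: "ball3 \<Rightarrow> (real ^ 3) set" where
  "ball_set B = cball (fst B) (snd B)"

definition ball_vol :: "ball3 \<Rightarrow> real" where
  "ball_vol B = measure lebesgue (ball_set B)"

definition ball_ctr :: "ball3 \<Rightarrow> real ^ 3" where
  "ball_ctr B = fst B"

definition is_cover :: "real \<Rightarrow> real \<Rightarrow> ball3 set \<Rightarrow> bool" where
  "is_cover \<sigma> \<eta> \<C> \<longleftrightarrow>
     \<sigma> > 0 \<and> \<eta> > 0 \<and>
     (\<Union>B\<in>\<C>. ball_set B) = UNIV \<and>
     (\<forall>B\<in>\<C>. ball_vol B \<ge> 4 * pi / 3) \<and>
     (\<forall>B\<in>\<C>. finite {B'\<in>\<C>. ball_set B \<inter> ball_set B' \<noteq> {}} \<and>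
              real (card {B'\<in>\<C>. ball_set B \<inter> ball_set B' \<noteq> {}}) \<le> \<sigma>) \<and>
     (\<forall>B\<in>\<C>. \<forall>B'\<in>\<C>. ball_set B \<inter> ball_set B' \<noteq> {} \<longrightarrow>
        inverse \<eta> \<le> ball_vol B powr (1/3) / ball_vol B' powr (1/3) \<and>
        ball_vol B powr (1/3) / ball_vol B' powr (1/3) \<le> \<eta>)"

end

theory Submission
  imports Defs
begin

text \<open>
  Balls containing the origin have bounded radius, hence are small compared to \<open>n\<close> for large \<open>n\<close>.
  If a ball \<open>B\<close> of radius \<open>r \<ge> 14 \<eta>\<^sup>4 n\<close> met \<open>B(0, 2n)\<close>, then along the segment from a point
  of \<open>B\<close> to the origin the ratio condition and connectedness would produce balls of radii in
  \<open>[r / \<eta>\<^sup>2, r / \<eta>)\<close> and \<open>[r / \<eta>\<^sup>4, r / \<eta>\<^sup>3)\<close>. These and \<open>B\<close> are pairwise disjoint by the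
  ratio condition, have radius at least \<open>14 n\<close> and meet \<open>B(0, 2n)\<close>; shrinking them to radius
  \<open>14 n\<close> gives three disjoint balls with centres in \<open>B(0, 16 n)\<close>, which is impossible since
  \<open>|a - b|\<^sup>2 + |b - c|\<^sup>2 + |c - a|\<^sup>2 \<le> 3 (|a|\<^sup>2 + |b|\<^sup>2 + |c|\<^sup>2)\<close>. So every ball meeting the
  annulus has radius below \<open>14 \<eta>\<^sup>4 n\<close> and misses the origin, which puts it inside \<open>B(0, L n)\<close>
  with centre beyond \<open>n / 2\<close>, where \<open>L = 2 + 28 \<eta>\<^sup>4\<close>.

  For the count, a greedy choice extracts a pairwise disjoint subfamily containing at least a
  \<open>1 / \<sigma>\<close> fraction of these balls; each has volume at least \<open>(\<kappa> n / 2)\<^sup>3\<close> by the growth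
  hypothesis and lies in \<open>B(0, L n)\<close>, and comparing volumes gives the bound.
\<close>

lemma cball_inside_cball_near_point:
  fixes c p :: "'a::real_normed_vector"
  assumes "0 < s" "s \<le> r" "p \<in> cball c r"
  obtains u where "dist u p \<le> s" "cball u s \<subseteq> cball c r"
proof -
  define u where "u = c + (1 - s/r) *\<^sub>R (p - c)"
  have "0 < r" and pc: "norm (p - c) \<le> r"
    using assms by (auto simp: dist_norm norm_minus_commute)
  have "dist u p = (s/r) * norm (p - c)"
    using assms(1) \<open>0 < r\<close> by (simp add: u_def dist_norm algebra_simps flip: scaleR_diff_right)
  also have "\<dots> \<le> s"
    using pc \<open>0 < r\<close> assms(1) by (simp add: divide_le_eq mult.commute mult_left_mono)
  finally have "dist u p \<le> s" .
  moreover have "dist c u \<le> r - s"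
  proof -
    have "dist c u = (1 - s/r) * norm (p - c)"
      using assms(2) \<open>0 < r\<close> by (simp add: u_def dist_norm)
    also have "\<dots> \<le> (1 - s/r) * r"
      using pc assms(2) \<open>0 < r\<close> by (intro mult_left_mono) auto
    finally show ?thesis
      using \<open>0 < r\<close> by (simp add: algebra_simps)
  qed
  then have "cball u s \<subseteq> cball c r"
  proof (intro subsetI)
    fix z assume "z \<in> cball u s"
    then show "z \<in> cball c r"
      using \<open>dist c u \<le> r - s\<close> dist_triangle[of c z u] by simp
  qed
  ultimately show ?thesis
    using that by blast
qed

lemma dist_gt_if_disjoint_cballs:
  fixes u v :: "'a::real_normed_vector"
  assumes "cball u s \<inter> cball v s = {}"
  shows "2 * s < dist u v"
proof (rule ccontr)
  assume "\<not> 2 * s < dist u v"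
  then have "midpoint u v \<in> cball u s \<inter> cball v s"
    by (auto simp: dist_midpoint dist_commute)
  then show False
    using assms by blast
qed

lemma pairwise_dist_three_points_le:
  fixes a b c :: "'a::real_inner"
  assumes "norm a \<le> \<rho>" "norm b \<le> \<rho>" "norm c \<le> \<rho>"
    and "0 \<le> d" "d < dist a b" "d < dist b c" "d < dist c a"
  shows "d\<^sup>2 < 3 * \<rho>\<^sup>2"
proof -
  have squared_distances: "(dist a b)\<^sup>2 + (dist b c)\<^sup>2 + (dist c a)\<^sup>2 + (norm (a + b + c))\<^sup>2
      = 3 * ((norm a)\<^sup>2 + (norm b)\<^sup>2 + (norm c)\<^sup>2)"
    by (simp add: dist_norm power2_norm_eq_inner inner_diff_left inner_diff_right
        inner_add_left inner_add_right inner_commute algebra_simps)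
  have "d\<^sup>2 < (dist a b)\<^sup>2" "d\<^sup>2 < (dist b c)\<^sup>2" "d\<^sup>2 < (dist c a)\<^sup>2"
    using assms by (auto intro: power_strict_mono)
  moreover have "(norm a)\<^sup>2 \<le> \<rho>\<^sup>2" "(norm b)\<^sup>2 \<le> \<rho>\<^sup>2" "(norm c)\<^sup>2 \<le> \<rho>\<^sup>2"
    using assms by (auto intro: power_mono)
  ultimately show ?thesis
    using squared_distances zero_le_power2[of "norm (a + b + c)"] by (smt (verit))
qed

lemma three_disjoint_cballs_near_origin:
  fixes c1 c2 c3 p1 p2 p3 :: "'a::real_inner"
  assumes "0 < s" "s \<le> r1" "s \<le> r2" "s \<le> r3"
    and "p1 \<in> cball c1 r1" "p2 \<in> cball c2 r2" "p3 \<in> cball c3 r3"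
    and "norm p1 \<le> t" "norm p2 \<le> t" "norm p3 \<le> t"
    and "cball c1 r1 \<inter> cball c2 r2 = {}" "cball c2 r2 \<inter> cball c3 r3 = {}"
      "cball c3 r3 \<inter> cball c1 r1 = {}"
  shows "4 * s\<^sup>2 < 3 * (s + t)\<^sup>2"
proof -
  have inner_ball: "\<exists>u. norm u \<le> s + t \<and> cball u s \<subseteq> cball c r"
    if r: "s \<le> r" "p \<in> cball c r" "norm p \<le> t" for c r and p :: 'a
  proof -
    obtain u where "dist u p \<le> s" "cball u s \<subseteq> cball c r"
      using cball_inside_cball_near_point \<open>0 < s\<close> r(1,2) by blast
    moreover have "norm u \<le> norm p + dist u p"
      using norm_triangle_sub[of u p] by (simp add: dist_norm)
    ultimately show ?thesis
      using r(3) by (intro exI[of _ u]) auto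
  qed
  obtain u1 u2 u3 where u: "norm u1 \<le> s + t" "norm u2 \<le> s + t" "norm u3 \<le> s + t"
    and "cball u1 s \<subseteq> cball c1 r1" "cball u2 s \<subseteq> cball c2 r2" "cball u3 s \<subseteq> cball c3 r3"
    using inner_ball assms by metis
  then have "cball u1 s \<inter> cball u2 s = {}" "cball u2 s \<inter> cball u3 s = {}"
    "cball u3 s \<inter> cball u1 s = {}"
    using assms(11-13) by blast+
  then have "2 * s < dist u1 u2" "2 * s < dist u2 u3" "2 * s < dist u3 u1"
    by (auto dest: dist_gt_if_disjoint_cballs)
  then have "(2 * s)\<^sup>2 < 3 * (s + t)\<^sup>2"
    using pairwise_dist_three_points_le[OF u, of "2 * s"] \<open>0 < s\<close> by simp
  then show ?thesis
    by (simp add: power_mult_distrib)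
qed

lemma powr_one_third_eq_root: "0 \<le> x \<Longrightarrow> x powr (1/3) = root 3 x"
  using root_powr_inverse[of 3 x] by simp

lemma cube_le_of_le_powr_one_third:
  fixes a v :: real
  assumes "0 \<le> a" "0 \<le> v" "a \<le> v powr (1/3)"
  shows "a ^ 3 \<le> v"
proof -
  have "a ^ 3 \<le> (v powr (1/3)) ^ 3"
    using assms by (intro power_mono)
  also have "\<dots> = v"
    using assms(2) by (simp add: powr_one_third_eq_root)
  finally show ?thesis .
qed

lemma ball_vol_eq: "0 \<le> snd B \<Longrightarrow> ball_vol B = 4/3 * pi * snd B ^ 3"
  using content_cball[of "snd B" "fst B :: real^3"] unit_ball_vol_3
  by (simp add: ball_vol_def ball_set_def measure_completion)

lemma ball_vol_powr_one_third:
  assumes "0 \<le> snd B"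
  shows "ball_vol B powr (1/3) = (4/3 * pi) powr (1/3) * snd B"
proof -
  have "(snd B ^ 3) powr (1/3) = snd B"
    using assms by (simp add: powr_one_third_eq_root real_root_power_cancel)
  then show ?thesis
    using assms powr_mult[of "4/3 * pi" "snd B ^ 3" "1/3"] by (simp add: ball_vol_eq)
qed

lemma measure_ball_real3: "0 \<le> r \<Longrightarrow> measure lebesgue (ball (c::real^3) r) = 4/3 * pi * r ^ 3"
  using content_ball[of r c] unit_ball_vol_3 by (simp add: measure_completion)

lemma greedy_disjoint_subfamily:
  fixes f :: "'a \<Rightarrow> 'b set" and \<sigma> :: real
  assumes "finite S" "\<And>x. x \<in> S \<Longrightarrow> f x \<noteq> {}"
    and "\<And>x. x \<in> S \<Longrightarrow> real (card {y \<in> S. f x \<inter> f y \<noteq> {}}) \<le> \<sigma>"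
  shows "\<exists>I\<subseteq>S. pairwise (\<lambda>x y. disjnt (f x) (f y)) I \<and> real (card S) \<le> \<sigma> * real (card I)"
  using assms
proof (induction S rule: finite_psubset_induct)
  case (psubset S)
  show ?case
  proof (cases "S = {}")
    case False
    then obtain x where "x \<in> S"
      by blast
    define N where "N = {y \<in> S. f x \<inter> f y \<noteq> {}}"
    have "x \<in> N" "N \<subseteq> S"
      using \<open>x \<in> S\<close> psubset.prems(1) by (auto simp: N_def)
    have "S - N \<subset> S"
      using \<open>x \<in> N\<close> \<open>N \<subseteq> S\<close> by blast
    moreover have "f y \<noteq> {}" if "y \<in> S - N" for y
      using psubset.prems(1) that by blast
    moreover have "real (card {z \<in> S - N. f y \<inter> f z \<noteq> {}}) \<le> \<sigma>" if "y \<in> S - N" for y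
    proof -
      have "card {z \<in> S - N. f y \<inter> f z \<noteq> {}} \<le> card {z \<in> S. f y \<inter> f z \<noteq> {}}"
        using psubset.hyps(1) by (intro card_mono) auto
      moreover have "real (card {z \<in> S. f y \<inter> f z \<noteq> {}}) \<le> \<sigma>"
        using psubset.prems(2) that by blast
      ultimately show ?thesis
        by linarith
    qed
    ultimately have "\<exists>I\<subseteq>S - N. pairwise (\<lambda>x y. disjnt (f x) (f y)) I \<and>
        real (card (S - N)) \<le> \<sigma> * real (card I)"
      by (rule psubset.IH)
    then obtain I where I: "I \<subseteq> S - N" "pairwise (\<lambda>x y. disjnt (f x) (f y)) I"
        "real (card (S - N)) \<le> \<sigma> * real (card I)"
      by blast
    have "x \<notin> I" "finite I"
      using I(1) \<open>x \<in> N\<close> psubset.hyps(1) finite_subset by auto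
    have "pairwise (\<lambda>x y. disjnt (f x) (f y)) (insert x I)"
      using I(1,2) by (auto simp: pairwise_insert N_def disjnt_def)
    moreover have "real (card S) \<le> \<sigma> * real (card (insert x I))"
    proof -
      have "card S = card N + card (S - N)"
        using \<open>N \<subseteq> S\<close> psubset.hyps(1) by (simp add: card_Diff_subset card_mono finite_subset)
      moreover have "real (card N) \<le> \<sigma>"
        using psubset.prems(2) \<open>x \<in> S\<close> by (simp add: N_def)
      ultimately show ?thesis
        using I(3) \<open>x \<notin> I\<close> \<open>finite I\<close> by (simp add: algebra_simps)
    qed
    moreover have "insert x I \<subseteq> S"
      using I(1) \<open>x \<in> S\<close> by blast
    ultimately show ?thesis
      by blast
  qed simp
qed

lemma card_mult_le_measure_disjoint_balls:
  assumes "finite I" "pairwise (\<lambda>B B'. disjnt (ball_set B) (ball_set B')) I"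
    and "\<And>B. B \<in> I \<Longrightarrow> ball_set B \<subseteq> ball 0 \<rho>" "\<And>B. B \<in> I \<Longrightarrow> v \<le> ball_vol B"
  shows "real (card I) * v \<le> measure lebesgue (ball (0::real^3) \<rho>)"
proof -
  have "real (card I) * v \<le> (\<Sum>B\<in>I. ball_vol B)"
    using assms(4) sum_mono[of I "\<lambda>_. v"] by simp
  also have "\<dots> = measure lebesgue (\<Union>B\<in>I. ball_set B)"
    unfolding ball_vol_def using assms(1,2)
    by (intro measure_UNION'[symmetric]) (auto simp: ball_set_def)
  also have "\<dots> \<le> measure lebesgue (ball (0::real^3) \<rho>)"
    using assms(1,3) by (intro measure_mono_fmeasurable) (auto simp: ball_set_def)
  finally show ?thesis .
qed

context
  fixes \<sigma> \<eta> :: real and \<C> :: "ball3 set"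
  assumes cover: "is_cover \<sigma> \<eta> \<C>"
begin

lemma cover_point_in_ball:
  obtains B where "B \<in> \<C>" "x \<in> ball_set B"
  using cover unfolding is_cover_def by blast

lemma cover_radius_ge_1:
  assumes "B \<in> \<C>"
  shows "1 \<le> snd B"
proof -
  have vol: "4 * pi / 3 \<le> ball_vol B"
    using cover assms by (simp add: is_cover_def)
  have "0 \<le> snd B"
  proof (rule ccontr)
    assume "\<not> 0 \<le> snd B"
    then have "ball_vol B = 0"
      by (simp add: ball_vol_def ball_set_def)
    then show False
      using vol pi_gt_zero by linarith
  qed
  with vol have "1 \<le> snd B ^ 3"
    by (simp add: ball_vol_eq)
  with \<open>0 \<le> snd B\<close> show ?thesis
    using power_less_one_iff[of "snd B" 3] by linarith
qed

lemma cover_radius_ratio_le: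
  assumes "B \<in> \<C>" "B' \<in> \<C>" "ball_set B \<inter> ball_set B' \<noteq> {}"
  shows "snd B \<le> \<eta> * snd B'"
proof -
  have r: "1 \<le> snd B" "1 \<le> snd B'"
    using assms cover_radius_ge_1 by auto
  have "ball_vol B powr (1/3) / ball_vol B' powr (1/3) \<le> \<eta>"
    using cover assms unfolding is_cover_def by blast
  then show ?thesis
    using r by (simp add: ball_vol_powr_one_third divide_le_eq)
qed

lemma cover_disjoint_if_radius_gap:
  assumes "B \<in> \<C>" "B' \<in> \<C>" "\<eta> * snd B' < snd B"
  shows "ball_set B \<inter> ball_set B' = {}"
proof (rule ccontr)
  assume "ball_set B \<inter> ball_set B' \<noteq> {}"
  then have "snd B \<le> \<eta> * snd B'"
    using cover_radius_ratio_le assms(1,2) by blast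
  with assms(3) show False
    by simp
qed

lemma cover_eta_ge_1: "1 \<le> \<eta>"
proof -
  obtain B where "B \<in> \<C>" "0 \<in> ball_set B"
    using cover_point_in_ball .
  then have "snd B \<le> \<eta> * snd B" "1 \<le> snd B"
    using cover_radius_ratio_le[of B B] cover_radius_ge_1[of B] by auto
  then show ?thesis
    by simp
qed

lemma cover_finite_containing:
  "finite {B \<in> \<C>. x \<in> ball_set B}"
proof -
  obtain B where B: "B \<in> \<C>" "x \<in> ball_set B"
    using cover_point_in_ball .
  then have "{B' \<in> \<C>. x \<in> ball_set B'} \<subseteq> {B' \<in> \<C>. ball_set B \<inter> ball_set B' \<noteq> {}}"
    by auto
  moreover have "finite {B' \<in> \<C>. ball_set B \<inter> ball_set B' \<noteq> {}}"
    using cover B(1) unfolding is_cover_def by blast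
  ultimately show ?thesis
    by (rule finite_subset)
qed

lemma cover_finite_meeting_bounded:
  assumes "bounded S"
  shows "finite {B \<in> \<C>. ball_set B \<inter> S \<noteq> {}}"
proof -
  obtain D where D: "\<And>x. x \<in> S \<Longrightarrow> norm x \<le> D"
    using assms unfolding bounded_iff by blast
  have "\<forall>\<epsilon>>0. \<exists>W. finite W \<and> cball (0::real^3) (D + 1) \<subseteq> (\<Union>w\<in>W. ball w \<epsilon>)"
    using compact_eq_totally_bounded compact_cball by metis
  then obtain W where "finite W" and W: "cball (0::real^3) (D + 1) \<subseteq> (\<Union>w\<in>W. ball w 1)"
    using zero_less_one by blast
  have "{B \<in> \<C>. ball_set B \<inter> S \<noteq> {}} \<subseteq> (\<Union>w\<in>W. {B \<in> \<C>. w \<in> ball_set B})"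
  proof
    fix B assume "B \<in> {B \<in> \<C>. ball_set B \<inter> S \<noteq> {}}"
    then obtain p where B: "B \<in> \<C>" "p \<in> cball (fst B) (snd B)" "p \<in> S"
      by (auto simp: ball_set_def)
    \<comment> \<open>A unit ball inside \<open>B\<close> lies near \<open>S\<close>, so it contains a point of the finite 1-net \<open>W\<close>.\<close>
    obtain u where "dist u p \<le> 1" and u: "cball u 1 \<subseteq> cball (fst B) (snd B)"
      using cball_inside_cball_near_point[OF zero_less_one cover_radius_ge_1[OF B(1)] B(2)] .
    moreover have "norm p \<le> D"
      using B(3) D by blast
    ultimately have "u \<in> cball 0 (D + 1)"
      using norm_triangle_sub[of u p] by (simp add: dist_norm)
    then obtain w where "w \<in> W" "dist w u < 1"
      using W by (force simp: dist_commute)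
    then have "w \<in> ball_set B"
      using u by (auto simp: ball_set_def subset_iff dist_commute)
    with \<open>w \<in> W\<close> B(1) show "B \<in> (\<Union>w\<in>W. {B \<in> \<C>. w \<in> ball_set B})"
      by blast
  qed
  moreover have "finite (\<Union>w\<in>W. {B \<in> \<C>. w \<in> ball_set B})"
    using \<open>finite W\<close> by (simp add: cover_finite_containing)
  ultimately show ?thesis
    by (rule finite_subset)
qed

lemma cover_radius_intermediate:
  assumes S: "connected S" "bounded S"
    and big: "B \<in> \<C>" "ball_set B \<inter> S \<noteq> {}" "\<eta> * t \<le> snd B"
    and small: "B' \<in> \<C>" "ball_set B' \<inter> S \<noteq> {}" "snd B' < t"
  obtains E where "E \<in> \<C>" "ball_set E \<inter> S \<noteq> {}" "t \<le> snd E" "snd E < \<eta> * t"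
proof (rule ccontr)
  assume no_intermediate: "\<not> thesis"
  define F where "F = {E \<in> \<C>. ball_set E \<inter> S \<noteq> {}}"
  have "finite F"
    unfolding F_def using cover_finite_meeting_bounded[OF S(2)] .
  define Big where "Big = \<Union>(ball_set ` {E \<in> F. \<eta> * t \<le> snd E})"
  define Small where "Small = \<Union>(ball_set ` {E \<in> F. snd E < t})"
  have "closed Big" "closed Small"
    unfolding Big_def Small_def using \<open>finite F\<close>
    by (auto intro!: closed_Union simp: ball_set_def)
  moreover have "S \<subseteq> Big \<union> Small"
  proof
    fix z assume "z \<in> S"
    obtain E where E: "E \<in> \<C>" "z \<in> ball_set E"
      using cover_point_in_ball .
    with \<open>z \<in> S\<close> have "E \<in> F"
      unfolding F_def by blast
    moreover have "\<eta> * t \<le> snd E \<or> snd E < t"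
      using that[of E] no_intermediate \<open>E \<in> F\<close> unfolding F_def by fastforce
    ultimately show "z \<in> Big \<union> Small"
      unfolding Big_def Small_def using E(2) by blast
  qed
  moreover have "Big \<inter> Small \<inter> S = {}"
  proof -
    have "ball_set E1 \<inter> ball_set E2 = {}"
      if "E1 \<in> \<C>" "E2 \<in> \<C>" "\<eta> * t \<le> snd E1" "snd E2 < t" for E1 E2
    proof -
      have "\<eta> * snd E2 < \<eta> * t"
        using that(4) cover_eta_ge_1 by simp
      then show ?thesis
        using cover_disjoint_if_radius_gap[OF that(1,2)] that(3) by simp
    qed
    then show ?thesis
      unfolding Big_def Small_def F_def by blast
  qed
  moreover have "Big \<inter> S \<noteq> {}" "Small \<inter> S \<noteq> {}"
    using big small unfolding Big_def Small_def F_def by blast+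
  ultimately show False
    using connected_closedD[OF S(1)] by metis
qed

lemma cover_radius_bound_near_origin:
  assumes "0 < m"
    and origin: "\<And>B0. B0 \<in> \<C> \<Longrightarrow> 0 \<in> ball_set B0 \<Longrightarrow> snd B0 < 14 * m"
    and B: "B \<in> \<C>" "p \<in> ball_set B" "norm p \<le> 2 * m"
  shows "snd B < 14 * \<eta> ^ 4 * m"
proof (rule ccontr)
  assume large: "\<not> snd B < 14 * \<eta> ^ 4 * m"
  have "1 \<le> \<eta>"
    using cover_eta_ge_1 .
  define a where "a = snd B / \<eta> ^ 4"
  have B_radius: "snd B = a * \<eta> ^ 4" and "14 * m \<le> a"
    using large \<open>1 \<le> \<eta>\<close> by (auto simp: a_def field_simps)
  have "0 \<le> a"
    using \<open>0 < m\<close> \<open>14 * m \<le> a\<close> by simp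
  have mono: "a * \<eta> ^ k \<le> a * \<eta> ^ l" if "k \<le> l" for k l
    using \<open>0 \<le> a\<close> \<open>1 \<le> \<eta>\<close> that by (intro mult_left_mono power_increasing) auto
  define S where "S = closed_segment 0 p"
  have S: "connected S" "bounded S"
    by (simp_all add: S_def compact_imp_bounded)
  have S_norm: "norm q \<le> 2 * m" if "q \<in> S" for q
    using that segment_bound(1)[of q 0 p] B(3) unfolding S_def by simp
  have "p \<in> S" "0 \<in> S"
    by (simp_all add: S_def)
  obtain B0 where B0: "B0 \<in> \<C>" "0 \<in> ball_set B0"
    using cover_point_in_ball .
  then have "snd B0 < a"
    using origin \<open>14 * m \<le> a\<close> by fastforce
  have B_S: "ball_set B \<inter> S \<noteq> {}" and B0_S: "ball_set B0 \<inter> S \<noteq> {}"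
    using B(2) B0(2) \<open>p \<in> S\<close> \<open>0 \<in> S\<close> by blast+
  \<comment> \<open>Connectedness of the segment from \<open>0\<close> to \<open>p\<close> yields two balls of intermediate radii;
    by the ratio condition they and \<open>B\<close> are pairwise disjoint, yet all are large and meet \<open>cball 0 (2 * m)\<close>.\<close>
  obtain E2 where E2: "E2 \<in> \<C>" "ball_set E2 \<inter> S \<noteq> {}" "a * \<eta> ^ 2 \<le> snd E2"
      "snd E2 < \<eta> * (a * \<eta> ^ 2)"
  proof (rule cover_radius_intermediate[OF S B(1) B_S _ B0(1) B0_S])
    show "\<eta> * (a * \<eta> ^ 2) \<le> snd B"
      using mono[of 3 4] B_radius by (simp add: eval_nat_numeral algebra_simps)
    show "snd B0 < a * \<eta> ^ 2"
      using mono[of 0 2] \<open>snd B0 < a\<close> by simp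
  qed
  obtain E3 where E3: "E3 \<in> \<C>" "ball_set E3 \<inter> S \<noteq> {}" "a \<le> snd E3" "snd E3 < \<eta> * a"
  proof (rule cover_radius_intermediate[OF S B(1) B_S _ B0(1) B0_S \<open>snd B0 < a\<close>])
    show "\<eta> * a \<le> snd B"
      using mono[of 1 4] B_radius by (simp add: algebra_simps)
  qed
  have "\<eta> * snd E2 < \<eta> * (\<eta> * (a * \<eta> ^ 2))" "\<eta> * snd E3 < \<eta> * (\<eta> * a)"
    using E2(4) E3(4) \<open>1 \<le> \<eta>\<close> by simp_all
  then have "\<eta> * snd E2 < snd B" "\<eta> * snd E3 < snd E2" "\<eta> * snd E3 < snd B"
    using B_radius E2(3) mono[of 2 4] by (simp_all add: eval_nat_numeral algebra_simps)
  then have disjoint: "ball_set B \<inter> ball_set E2 = {}" "ball_set E2 \<inter> ball_set E3 = {}"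
      "ball_set E3 \<inter> ball_set B = {}"
    using cover_disjoint_if_radius_gap B(1) E2(1) E3(1) by blast+
  obtain p2 p3 where p2: "p2 \<in> ball_set E2" "p2 \<in> S" and p3: "p3 \<in> ball_set E3" "p3 \<in> S"
    using E2(2) E3(2) by blast
  have "14 * m \<le> snd B" "14 * m \<le> snd E2" "14 * m \<le> snd E3"
    using \<open>14 * m \<le> a\<close> B_radius E2(3) E3(3) mono[of 0 4] mono[of 0 2] by simp_all
  from three_disjoint_cballs_near_origin[OF _ this B(2)[unfolded ball_set_def]
      p2(1)[unfolded ball_set_def] p3(1)[unfolded ball_set_def] B(3) S_norm[OF p2(2)]
      S_norm[OF p3(2)] disjoint[unfolded ball_set_def]]
  have "4 * (14 * m)\<^sup>2 < 3 * (14 * m + 2 * m)\<^sup>2"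
    using \<open>0 < m\<close> by simp
  then show False
    by (simp add: power2_eq_square)
qed

lemma cover_ball_meeting_annulus:
  assumes "0 < m"
    and origin: "\<And>B0. B0 \<in> \<C> \<Longrightarrow> 0 \<in> ball_set B0 \<Longrightarrow> 2 * snd B0 < m"
    and B: "B \<in> \<C>" "p \<in> ball_set B" "m \<le> norm p" "norm p \<le> 2 * m"
  shows "ball_set B \<subseteq> ball 0 ((2 + 28 * \<eta> ^ 4) * m)" "m / 2 < norm (ball_ctr B)"
proof -
  have "snd B0 < 14 * m" if "B0 \<in> \<C>" "0 \<in> ball_set B0" for B0
    using origin[OF that] \<open>0 < m\<close> by linarith
  then have radius: "snd B < 14 * \<eta> ^ 4 * m"
    using cover_radius_bound_near_origin[OF \<open>0 < m\<close> _ B(1,2,4)] by blast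
  have near_centre: "norm x \<le> norm (fst B) + snd B" if "x \<in> ball_set B" for x
    using that dist_triangle[of 0 x "fst B"] by (simp add: ball_set_def)
  have "0 \<notin> ball_set B"
  proof
    assume "0 \<in> ball_set B"
    then have "2 * snd B < m" "norm (fst B) \<le> snd B"
      using origin B(1) by (auto simp: ball_set_def)
    then show False
      using near_centre[OF B(2)] B(3) by linarith
  qed
  then have "snd B < norm (fst B)"
    by (simp add: ball_set_def)
  then show "m / 2 < norm (ball_ctr B)"
    using near_centre[OF B(2)] B(3) by (simp add: ball_ctr_def)
  have "norm (fst B) \<le> norm p + snd B"
    using B(2) dist_triangle[of 0 "fst B" p] by (simp add: ball_set_def dist_commute)
  then show "ball_set B \<subseteq> ball 0 ((2 + 28 * \<eta> ^ 4) * m)"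
    using near_centre radius B(4) by (force simp: algebra_simps)
qed

lemma cover_eventually_annulus_balls_localised:
  "\<forall>\<^sub>F n in sequentially. \<forall>B\<in>\<C>.
     ball_set B \<inter> (ball 0 (2 * real n) - ball 0 (real n)) \<noteq> {} \<longrightarrow>
     ball_set B \<subseteq> ball 0 ((2 + 28 * \<eta> ^ 4) * real n) \<and> real n / 2 < norm (ball_ctr B)"
proof -
  obtain B0 where B0: "B0 \<in> \<C>" "0 \<in> ball_set B0"
    using cover_point_in_ball .
  have origin: "snd B \<le> \<eta> * snd B0" if "B \<in> \<C>" "0 \<in> ball_set B" for B
    using cover_radius_ratio_le[OF that(1) B0(1)] that(2) B0(2) by blast
  have "0 < \<eta> * snd B0"
    using cover_eta_ge_1 cover_radius_ge_1[OF B0(1)] by simp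
  have "\<forall>\<^sub>F n in sequentially. 2 * (\<eta> * snd B0) < real n"
    using filterlim_real_sequentially by (simp add: filterlim_at_top_dense)
  then show ?thesis
  proof (rule eventually_mono, intro ballI impI)
    fix n B
    assume n: "2 * (\<eta> * snd B0) < real n" and "B \<in> \<C>"
      and "ball_set B \<inter> (ball 0 (2 * real n) - ball 0 (real n)) \<noteq> {}"
    then obtain p where "p \<in> ball_set B" "p \<in> ball 0 (2 * real n) - ball 0 (real n)"
      by blast
    then have "p \<in> ball_set B" "real n \<le> norm p" "norm p \<le> 2 * real n"
      by auto
    moreover have "2 * snd B' < real n" if "B' \<in> \<C>" "0 \<in> ball_set B'" for B'
      using origin[OF that] n by linarith
    moreover have "0 < real n"
      using n \<open>0 < \<eta> * snd B0\<close> by linarith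
    ultimately show "ball_set B \<subseteq> ball 0 ((2 + 28 * \<eta> ^ 4) * real n) \<and>
        real n / 2 < norm (ball_ctr B)"
      using cover_ball_meeting_annulus \<open>B \<in> \<C>\<close> by blast
  qed
qed

lemma cover_card_mult_le_measure:
  assumes "finite S" "S \<subseteq> \<C>" "0 \<le> v"
    and "\<And>B. B \<in> S \<Longrightarrow> ball_set B \<subseteq> ball 0 \<rho>" "\<And>B. B \<in> S \<Longrightarrow> v \<le> ball_vol B"
  shows "real (card S) * v \<le> \<sigma> * measure lebesgue (ball (0::real^3) \<rho>)"
proof -
  have "\<sigma> > 0"
    using cover by (simp add: is_cover_def)
  have "ball_set B \<noteq> {}" if "B \<in> S" for B
    using cover_radius_ge_1[of B] that assms(2) by (auto simp: ball_set_def)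
  moreover have "real (card {B' \<in> S. ball_set B \<inter> ball_set B' \<noteq> {}}) \<le> \<sigma>" if "B \<in> S" for B
  proof -
    have "B \<in> \<C>"
      using that assms(2) by blast
    then have "finite {B' \<in> \<C>. ball_set B \<inter> ball_set B' \<noteq> {}}"
      and "real (card {B' \<in> \<C>. ball_set B \<inter> ball_set B' \<noteq> {}}) \<le> \<sigma>"
      using cover unfolding is_cover_def by blast+
    moreover have "card {B' \<in> S. ball_set B \<inter> ball_set B' \<noteq> {}}
        \<le> card {B' \<in> \<C>. ball_set B \<inter> ball_set B' \<noteq> {}}"
      using calculation(1) assms(2) by (intro card_mono) auto
    ultimately show ?thesis
      by linarith
  qed
  ultimately obtain I where I: "I \<subseteq> S" "pairwise (\<lambda>B B'. disjnt (ball_set B) (ball_set B')) I"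
      "real (card S) \<le> \<sigma> * real (card I)"
    using greedy_disjoint_subfamily[OF assms(1)] by blast
  have "real (card S) * v \<le> \<sigma> * (real (card I) * v)"
    using I(3) assms(3) by (metis mult.assoc mult_right_mono)
  also have "\<dots> \<le> \<sigma> * measure lebesgue (ball (0::real^3) \<rho>)"
    using I assms(1,4,5) \<open>\<sigma> > 0\<close>
    by (intro mult_left_mono card_mult_le_measure_disjoint_balls) (auto intro: finite_subset)
  finally show ?thesis .
qed

lemma cover_annulus_card_bound:
  assumes "0 < \<kappa>" "0 < m" "2 \<le> L" "finite S" "S \<subseteq> \<C>"
    and inside: "\<And>B. B \<in> S \<Longrightarrow> ball_set B \<subseteq> ball 0 (L * m)"
    and large: "\<And>B. B \<in> S \<Longrightarrow> \<kappa> * m / 2 \<le> ball_vol B powr (1/3)"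
  shows "real (card S) \<le> 4 * pi / 3 * \<sigma> * L ^ 6 / \<kappa> ^ 3"
proof -
  have "0 < \<sigma>"
    using cover by (simp add: is_cover_def)
  have "(\<kappa> * m / 2) ^ 3 \<le> ball_vol B" if "B \<in> S" for B
    using cube_le_of_le_powr_one_third[OF _ _ large[OF that]] assms(1,2)
    by (simp add: ball_vol_def)
  then have "real (card S) * (\<kappa> * m / 2) ^ 3 \<le> \<sigma> * measure lebesgue (ball (0::real^3) (L * m))"
    using cover_card_mult_le_measure[OF assms(4,5) _ inside] assms(1,2) by simp
  also have "\<dots> = \<sigma> * (4/3 * pi * (L * m) ^ 3)"
    using measure_ball_real3 assms(2,3) by simp
  finally have "real (card S) * (\<kappa> * m / 2) ^ 3 \<le> \<sigma> * (4/3 * pi * (L * m) ^ 3)" .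
  then have "m ^ 3 * (real (card S) * \<kappa> ^ 3) \<le> m ^ 3 * (8 * (4/3 * pi * \<sigma> * L ^ 3))"
    by (simp add: power_mult_distrib power_divide field_simps)
  then have "real (card S) * \<kappa> ^ 3 \<le> 8 * (4/3 * pi * \<sigma> * L ^ 3)"
    using \<open>0 < m\<close> by simp
  also have "\<dots> \<le> L ^ 3 * (4/3 * pi * \<sigma> * L ^ 3)"
    using power_mono[OF assms(3), of 3] \<open>0 < \<sigma>\<close> assms(3) by (intro mult_right_mono) auto
  finally show ?thesis
    using \<open>0 < \<kappa>\<close> by (simp add: pos_le_divide_eq power_add[symmetric] algebra_simps)
qed

lemma cover_eventually_annulus_estimates:
  assumes "0 < \<kappa>"
    and growth: "\<And>B. B \<in> \<C> \<Longrightarrow> R \<le> norm (ball_ctr B) \<Longrightarrow>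
      \<kappa> * norm (ball_ctr B) \<le> ball_vol B powr (1/3)"
  defines "L \<equiv> 2 + 28 * \<eta> ^ 4"
    and "A \<equiv> \<lambda>n. ball 0 (2 * real n) - ball 0 (real n)"
  shows "\<forall>\<^sub>F n in sequentially.
    (\<forall>B\<in>\<C>. ball_set B \<inter> A n \<noteq> {} \<longrightarrow>
       ball_set B \<subseteq> ball 0 (L * real n) \<and> real n / L \<le> norm (ball_ctr B)) \<and>
    finite {B\<in>\<C>. ball_set B \<inter> A n \<noteq> {}} \<and>
    real (card {B\<in>\<C>. ball_set B \<inter> A n \<noteq> {}}) \<le> 4 * pi / 3 * \<sigma> * L ^ 6 / \<kappa> ^ 3"
proof -
  have "\<forall>\<^sub>F n in sequentially. 2 * max R 1 \<le> real n"
    using filterlim_real_sequentially unfolding filterlim_at_top by blast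
  with cover_eventually_annulus_balls_localised
  show ?thesis
  proof (eventually_elim)
    case (elim n)
    have "0 < real n" "2 \<le> L"
      using elim(2) by (simp_all add: L_def)
    have "real n / L \<le> real n / 2"
      using \<open>2 \<le> L\<close> by (intro divide_left_mono) auto
    then have localised: "ball_set B \<subseteq> ball 0 (L * real n) \<and> real n / L \<le> norm (ball_ctr B)"
      if "B \<in> \<C>" "ball_set B \<inter> A n \<noteq> {}" for B
    proof -
      have "ball_set B \<subseteq> ball 0 (L * real n) \<and> real n / 2 < norm (ball_ctr B)"
        using elim(1) that unfolding A_def L_def by blast
      then show ?thesis
        using \<open>real n / L \<le> real n / 2\<close> by linarith
    qed
    have "bounded (A n)"
      by (simp add: A_def bounded_diff)
    then have finite: "finite {B\<in>\<C>. ball_set B \<inter> A n \<noteq> {}}"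
      by (rule cover_finite_meeting_bounded)
    have "\<kappa> * real n / 2 \<le> ball_vol B powr (1/3)"
      if "B \<in> \<C>" "ball_set B \<inter> A n \<noteq> {}" for B
    proof -
      have "real n / 2 < norm (ball_ctr B)"
        using elim(1) that by (simp add: A_def)
      then have "\<kappa> * (real n / 2) \<le> \<kappa> * norm (ball_ctr B)"
        using \<open>0 < \<kappa>\<close> by simp
      also have "\<dots> \<le> ball_vol B powr (1/3)"
        using growth[OF that(1)] elim(2) \<open>real n / 2 < norm (ball_ctr B)\<close> by simp
      finally show ?thesis
        by simp
    qed
    with localised have "real (card {B\<in>\<C>. ball_set B \<inter> A n \<noteq> {}}) \<le> 4 * pi / 3 * \<sigma> * L ^ 6 / \<kappa> ^ 3"
      by (intro cover_annulus_card_bound[OF \<open>0 < \<kappa>\<close> \<open>0 < real n\<close> \<open>2 \<le> L\<close> finite]) auto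
    with localised finite show ?case
      by blast
  qed
qed

end

theorem lemma5p5:
  fixes \<eta> \<kappa> :: real
  assumes "\<eta> > 0" and "\<kappa> > 0"
  shows "\<exists>L\<ge>2. \<forall>(\<sigma>::real) (\<C>::ball3 set).
     is_cover \<sigma> \<eta> \<C> \<longrightarrow>
     (\<exists>R. \<forall>B\<in>\<C>. norm (ball_ctr B) \<ge> R \<longrightarrow>
            ball_vol B powr (1/3) \<ge> \<kappa> * norm (ball_ctr B)) \<longrightarrow>
     (\<exists>N::nat. \<forall>n\<ge>N.
        (\<forall>B\<in>\<C>. ball_set B \<inter> (ball 0 (2 * real n) - ball 0 (real n)) \<noteq> {} \<longrightarrow>
             ball_set B \<subseteq> ball 0 (L * real n) \<and> norm (ball_ctr B) \<ge> real n / L) \<and>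
        finite {B\<in>\<C>. ball_set B \<inter> (ball 0 (2 * real n) - ball 0 (real n)) \<noteq> {}} \<and>
        real (card {B\<in>\<C>. ball_set B \<inter> (ball 0 (2 * real n) - ball 0 (real n)) \<noteq> {}})
          \<le> 4 * pi / 3 * \<sigma> * L ^ 6 / \<kappa> ^ 3)"
  apply (intro exI[of _ "2 + 28 * \<eta> ^ 4"] conjI allI impI)
   apply simp
  subgoal premises prems for \<sigma> \<C>
  proof -
    obtain R where "\<And>B. B \<in> \<C> \<Longrightarrow> R \<le> norm (ball_ctr B) \<Longrightarrow>
        \<kappa> * norm (ball_ctr B) \<le> ball_vol B powr (1/3)"
      using prems(2) by blast
    from cover_eventually_annulus_estimates[OF prems(1) assms(2) this]
    show ?thesis
      unfolding eventually_sequentially .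
  qed
  done

end
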